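(* Let $(\mathsf P,\mathcal O)$ be a semitopology, let $\mathsf{Val}$ be a set with at least two elements equipped with the discrete semitopology, and let $T\subseteq\mathsf P$ be any set. Suppose that for every $p,p'\in T$ and every function $f:\mathsf P\to\mathsf{Val}$, if $f$ is continuous at $p$ and at $p'$ then $f(p)=f(p')$. Then $T$ is transitive.
   Context: A semitopology is a pair $(\mathsf P,\mathcal O)$ where $\mathsf P$ is a set and $\mathcal O\subseteq\mathcal P(\mathsf P)$ contains $\varnothing$ and $\mathsf P$ and is closed under arbitrary unions; elements of $\mathcal O$ are open sets. Write $X\between Y$ when $X\cap Y\neq\varnothing$. A set $T\subseteq\mathsf P$ is transitive when for all $O,O'\in\mathcal O$, $O\between T$ and $T\between O'$ imply $O\between O'$. A function $f:\mathsf P\to\mathsf{Val}$ is continuous at $p$ when for every open $V\ni f(p)$ there is an open $O$ with $p\in O\subseteq f^{-1}(V)$. *)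

theory Defs
  imports Main
begin

definition semitopology :: "'a set \<Rightarrow> 'a set set \<Rightarrow> bool" where
  "semitopology P Opens \<longleftrightarrow>
     (\<forall>U\<in>Opens. U \<subseteq> P) \<and> {} \<in> Opens \<and> P \<in> Opens \<and>
     (\<forall>S. S \<subseteq> Opens \<longrightarrow> \<Union>S \<in> Opens)"

definition discrete_semitopology :: "'b set \<Rightarrow> 'b set set" where
  "discrete_semitopology V = Pow V"

definition intersects :: "'a set \<Rightarrow> 'a set \<Rightarrow> bool" (infix "\<between>" 50) where
  "X \<between> Y \<longleftrightarrow> X \<inter> Y \<noteq> {}"

definition transitive_set :: "'a set set \<Rightarrow> 'a set \<Rightarrow> bool" where
  "transitive_set Opens T \<longleftrightarrow>
     (\<forall>U\<in>Opens. \<forall>U'\<in>Opens. U \<between> T \<and> T \<between> U' \<longrightarrow> U \<between> U')"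

definition continuous_at ::
  "'a set \<Rightarrow> 'a set set \<Rightarrow> 'b set set \<Rightarrow> ('a \<Rightarrow> 'b) \<Rightarrow> 'a \<Rightarrow> bool" where
  "continuous_at P OP OV f p \<longleftrightarrow>
     (\<forall>V\<in>OV. f p \<in> V \<longrightarrow> (\<exists>U\<in>OP. p \<in> U \<and> U \<subseteq> {x\<in>P. f x \<in> V}))"

end

theory Submission
  imports Defs
begin

text \<open>If T were not transitive, disjoint opens U and U' would meet T at points p and p'.
  The function that is a on U and b elsewhere is locally constant at p (on U) and at
  p' (on U', as U and U' are disjoint), hence continuous at both, yet separates them.\<close>

lemma continuous_at_if_constant_on_open:
  assumes "U \<in> OP" "U \<subseteq> P" "p \<in> U" "\<forall>x\<in>U. f x = f p"
  shows "continuous_at P OP OV f p"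
  unfolding continuous_at_def
proof (intro ballI impI)
  fix V assume "f p \<in> V"
  with assms(2,4) have "U \<subseteq> {x \<in> P. f x \<in> V}" by auto
  with assms(1,3) show "\<exists>W\<in>OP. p \<in> W \<and> W \<subseteq> {x \<in> P. f x \<in> V}" by blast
qed

theorem proposition3p7:
  fixes P :: "'a set" and Opens :: "'a set set" and Val :: "'b set" and T :: "'a set"
  assumes "semitopology P Opens"
    and "\<exists>x\<in>Val. \<exists>y\<in>Val. x \<noteq> y"
    and "T \<subseteq> P"
    and "\<forall>p\<in>T. \<forall>p'\<in>T. \<forall>f. f ` P \<subseteq> Val \<longrightarrow>
           continuous_at P Opens (discrete_semitopology Val) f p \<longrightarrow>
           continuous_at P Opens (discrete_semitopology Val) f p' \<longrightarrow> f p = f p'"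
  shows "transitive_set Opens T"
  unfolding transitive_set_def
proof (intro ballI impI)
  fix U U' assume opens: "U \<in> Opens" "U' \<in> Opens" and meets: "U \<between> T \<and> T \<between> U'"
  show "U \<between> U'"
  proof (rule ccontr)
    assume "\<not> U \<between> U'"
    then have disjoint: "U \<inter> U' = {}" by (simp add: intersects_def)
    obtain a b where ab: "a \<in> Val" "b \<in> Val" "a \<noteq> b" using assms(2) by blast
    obtain p p' where p: "p \<in> U" "p \<in> T" and p': "p' \<in> U'" "p' \<in> T"
      using meets by (auto simp: intersects_def)
    have subsets: "U \<subseteq> P" "U' \<subseteq> P" using assms(1) opens by (auto simp: semitopology_def)
    define f where "f x = (if x \<in> U then a else b)" for x
    have "f ` P \<subseteq> Val" using ab by (auto simp: f_def)
    moreover have "continuous_at P Opens (discrete_semitopology Val) f p"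
      using opens(1) subsets(1) p(1) by (intro continuous_at_if_constant_on_open) (auto simp: f_def)
    moreover have "continuous_at P Opens (discrete_semitopology Val) f p'"
      using opens(2) subsets(2) p'(1) disjoint
      by (intro continuous_at_if_constant_on_open) (auto simp: f_def)
    ultimately have "f p = f p'" using assms(4) p(2) p'(2) by simp
    moreover have "p' \<notin> U" using p'(1) disjoint by blast
    ultimately show False using p(1) ab(3) by (simp add: f_def)
  qed
qed

end
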